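(* Let $\mathcal E_1,\mathcal E_2$ be CPTP maps on system $A$, $p\in[0,1]$, and let $P^A$ be the linear map $P^A[X]=p\,\mathcal E_1[X]+(1-p)\,\mathcal E_2[X^T]$. Then for every bipartite state $\rho=\rho^{AB}$ (finite-dimensional), $$E^{A|B}\big((P^A\otimes\mathrm{id}^B)[\rho]\big)\le E^{A|B}(\rho),$$ where $(P^A\otimes\mathrm{id}^B)[\rho]=p(\mathcal E_1^A\otimes\mathrm{id}^B)[\rho]+(1-p)(\mathcal E_2^A\otimes\mathrm{id}^B)[\rho^{T_A}]$.
   Context: For a Hermitian operator $X$ of unit trace on $\mathcal H_A\otimes\mathcal H_B$ (not necessarily positive), the negativity is $E^{A|B}(X)=\frac{\|X^{T_B}\|_1-1}{2}$, where $T_A,T_B$ denote partial transposition on $A$ resp. $B$ (in fixed bases) and $\|M\|_1=\mathrm{Tr}\sqrt{M^\dagger M}$. *)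

theory Defs
  imports "Jordan_Normal_Form.Matrix"
begin

text \<open>A bipartite system A|B with dimensions dA, dB: the basis vector with A-index i < dA and
B-index k < dB has flat index i * dB + k (so A is the first tensor factor).\<close>

definition mtrace :: "complex mat \<Rightarrow> complex" where
  "mtrace M = (\<Sum>i<dim_row M. M $$ (i,i))"

definition adj :: "complex mat \<Rightarrow> complex mat" where
  "adj M = mat (dim_col M) (dim_row M) (\<lambda>(i,j). cnj (M $$ (j,i)))"

definition hermitian :: "nat \<Rightarrow> complex mat \<Rightarrow> bool" where
  "hermitian n M \<longleftrightarrow> M \<in> carrier_mat n n \<and> adj M = M"

definition psd :: "nat \<Rightarrow> complex mat \<Rightarrow> bool" where
  "psd n M \<longleftrightarrow> hermitian n M \<and>
     (\<forall>v. dim_vec v = n \<longrightarrow> 0 \<le> Re (\<Sum>i<n. cnj (v $ i) * (M *\<^sub>v v) $ i))"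

definition psd_sqrt :: "complex mat \<Rightarrow> complex mat" where
  "psd_sqrt M = (THE S. psd (dim_row M) S \<and> S * S = M)"

definition trace_norm :: "complex mat \<Rightarrow> real" where
  "trace_norm M = Re (mtrace (psd_sqrt (adj M * M)))"

definition density_op :: "nat \<Rightarrow> complex mat \<Rightarrow> bool" where
  "density_op n \<rho> \<longleftrightarrow> psd n \<rho> \<and> mtrace \<rho> = 1"

definition ptrans_A :: "nat \<Rightarrow> nat \<Rightarrow> complex mat \<Rightarrow> complex mat" where
  "ptrans_A dA dB X = mat (dA*dB) (dA*dB)
     (\<lambda>(r,c). X $$ ((c div dB) * dB + r mod dB, (r div dB) * dB + c mod dB))"

definition ptrans_B :: "nat \<Rightarrow> nat \<Rightarrow> complex mat \<Rightarrow> complex mat" where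
  "ptrans_B dA dB X = mat (dA*dB) (dA*dB)
     (\<lambda>(r,c). X $$ ((r div dB) * dB + c mod dB, (c div dB) * dB + r mod dB))"

definition negativity :: "nat \<Rightarrow> nat \<Rightarrow> complex mat \<Rightarrow> real" where
  "negativity dA dB X = (trace_norm (ptrans_B dA dB X) - 1) / 2"

text \<open>(E \<otimes> id_n)[X] for a map E on dA x dA matrices and X a (dA*n)-dim operator:
apply E to each block X_{kl} = (X((i,k),(j,l)))_{i,j}.\<close>
definition tensor_id :: "nat \<Rightarrow> nat \<Rightarrow> (complex mat \<Rightarrow> complex mat) \<Rightarrow> complex mat \<Rightarrow> complex mat" where
  "tensor_id dA n E X = mat (dA*n) (dA*n)
     (\<lambda>(r,c). E (mat dA dA (\<lambda>(i,j). X $$ (i * n + r mod n, j * n + c mod n))) $$ (r div n, c div n))"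

definition linear_map_on :: "nat \<Rightarrow> (complex mat \<Rightarrow> complex mat) \<Rightarrow> bool" where
  "linear_map_on d E \<longleftrightarrow>
     (\<forall>X \<in> carrier_mat d d. E X \<in> carrier_mat d d) \<and>
     (\<forall>X \<in> carrier_mat d d. \<forall>Y \<in> carrier_mat d d. \<forall>a b :: complex.
        E (a \<cdot>\<^sub>m X + b \<cdot>\<^sub>m Y) = a \<cdot>\<^sub>m E X + b \<cdot>\<^sub>m E Y)"

definition cptp :: "nat \<Rightarrow> (complex mat \<Rightarrow> complex mat) \<Rightarrow> bool" where
  "cptp d E \<longleftrightarrow> linear_map_on d E \<and>
     (\<forall>X \<in> carrier_mat d d. mtrace (E X) = mtrace X) \<and>
     (\<forall>n. \<forall>X. psd (d*n) X \<longrightarrow> psd (d*n) (tensor_id d n E X))"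

end

theory Submission
  imports Defs "Jordan_Normal_Form.Spectral_Radius"
begin

text \<open>Write \<open>\<rho>'\<close> for the partial transpose on B of \<open>\<rho>\<close>. Since \<open>E \<otimes> id\<close> commutes with the
  partial transpose on B, and the two partial transposes compose to the full transpose \<open>\<rho>\<^sup>T\<close>,
  the partial transpose of the output is \<open>p (E\<^sub>1 \<otimes> id)[\<rho>'] + (1 - p) (E\<^sub>2 \<otimes> id)[\<rho>\<^sup>T]\<close>.
  Split the Hermitian unit-trace operator \<open>\<rho>' = P - N\<close> into positive and negative parts, so that
  \<open>\<parallel>\<rho>'\<parallel>\<^sub>1 = tr P + tr N\<close> and \<open>tr P - tr N = 1\<close>. The transformed operator is then the
  difference of the positive operators \<open>p (E\<^sub>1 \<otimes> id)[P] + (1 - p) (E\<^sub>2 \<otimes> id)[\<rho>\<^sup>T]\<close> and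
  \<open>p (E\<^sub>1 \<otimes> id)[N]\<close>. A difference of positive operators has trace norm at most the sum of
  their traces, and the channels preserve traces, so its trace norm is at most
  \<open>p (tr P + tr N) + (1 - p) \<le> tr P + tr N\<close>.\<close>

declare index_mult_mat(1)[simp del] index_mult_mat_vec[simp del]

lemma mult_carrier_mat_square[simp]:
  "A \<in> carrier_mat n n \<Longrightarrow> B \<in> carrier_mat n n \<Longrightarrow> A * B \<in> carrier_mat n n"
  by (rule mult_carrier_mat)

lemma index_mult_mat_sum:
  assumes "A \<in> carrier_mat n k" "B \<in> carrier_mat k m" "i < n" "j < m"
  shows "(A * B) $$ (i,j) = (\<Sum>l<k. A $$ (i,l) * B $$ (l,j))"
  using assms by (auto simp: index_mult_mat(1) scalar_prod_def lessThan_atLeast0 intro!: sum.cong)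

lemma index_mult_mat_vec_sum:
  assumes "A \<in> carrier_mat n k" "v \<in> carrier_vec k" "i < n"
  shows "(A *\<^sub>v v) $ i = (\<Sum>l<k. A $$ (i,l) * v $ l)"
  using assms by (auto simp: index_mult_mat_vec scalar_prod_def lessThan_atLeast0 intro!: sum.cong)

lemma adj_carrier[simp]: "M \<in> carrier_mat r c \<Longrightarrow> adj M \<in> carrier_mat c r"
  by (auto simp: adj_def)

lemma adj_dims[simp]: "dim_row (adj M) = dim_col M" "dim_col (adj M) = dim_row M"
  by (auto simp: adj_def)

lemma index_adj[simp]: "i < dim_col M \<Longrightarrow> j < dim_row M \<Longrightarrow> adj M $$ (i,j) = cnj (M $$ (j,i))"
  by (auto simp: adj_def)

lemma adj_adj[simp]: "adj (adj M) = M"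
  by (rule eq_matI) auto

lemma adj_mult:
  assumes "A \<in> carrier_mat n k" "B \<in> carrier_mat k m"
  shows "adj (A * B) = adj B * adj A"
proof (rule eq_matI)
  fix i j assume "i < dim_row (adj B * adj A)" "j < dim_col (adj B * adj A)"
  then have ij: "i < m" "j < n" using assms by auto
  show "adj (A * B) $$ (i, j) = (adj B * adj A) $$ (i, j)"
    using assms ij by (simp add: index_mult_mat_sum[of _ m k _ n] index_mult_mat_sum[of _ n k _ m] mult.commute)
qed (use assms in auto)

lemma adj_add: "A \<in> carrier_mat n m \<Longrightarrow> B \<in> carrier_mat n m \<Longrightarrow> adj (A + B) = adj A + adj B"
  by (rule eq_matI) auto

lemma adj_minus: "A \<in> carrier_mat n m \<Longrightarrow> B \<in> carrier_mat n m \<Longrightarrow> adj (A - B) = adj A - adj B"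
  by (rule eq_matI) auto

lemma adj_smult: "adj (c \<cdot>\<^sub>m A) = cnj c \<cdot>\<^sub>m adj A"
  by (rule eq_matI) auto

lemma adj_mult_adj_conj:
  assumes "V \<in> carrier_mat n n" "P \<in> carrier_mat n n" "adj P = P"
  shows "adj (adj V * P * V) = adj V * P * V"
  using assms by (simp add: adj_mult[of _ n n _ n] assoc_mult_mat[of _ n n _ n _ n])

lemma mtrace_mult_comm:
  assumes "A \<in> carrier_mat n m" "B \<in> carrier_mat m n"
  shows "mtrace (A * B) = mtrace (B * A)"
proof -
  have "mtrace (A * B) = (\<Sum>i<n. \<Sum>l<m. A $$ (i,l) * B $$ (l,i))"
    using assms by (auto simp: mtrace_def index_mult_mat_sum intro!: sum.cong)
  also have "\<dots> = (\<Sum>l<m. \<Sum>i<n. B $$ (l,i) * A $$ (i,l))"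
    by (subst sum.swap) (simp add: mult.commute)
  also have "\<dots> = mtrace (B * A)"
    using assms by (auto simp: mtrace_def index_mult_mat_sum intro!: sum.cong)
  finally show ?thesis .
qed

lemma mtrace_add: "A \<in> carrier_mat n n \<Longrightarrow> B \<in> carrier_mat n n \<Longrightarrow> mtrace (A + B) = mtrace A + mtrace B"
  by (auto simp: mtrace_def sum.distrib)

lemma mtrace_minus: "A \<in> carrier_mat n n \<Longrightarrow> B \<in> carrier_mat n n \<Longrightarrow> mtrace (A - B) = mtrace A - mtrace B"
  by (auto simp: mtrace_def sum_subtractf)

lemma mtrace_smult: "A \<in> carrier_mat n n \<Longrightarrow> mtrace (c \<cdot>\<^sub>m A) = c * mtrace A"
  by (auto simp: mtrace_def sum_distrib_left intro!: sum.cong)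

lemma mtrace_transpose: "A \<in> carrier_mat n n \<Longrightarrow> mtrace (transpose_mat A) = mtrace A"
  by (simp add: mtrace_def)

definition rdiag :: "nat \<Rightarrow> (nat \<Rightarrow> real) \<Rightarrow> complex mat" where
  "rdiag n d = mat n n (\<lambda>(i,j). if i = j then complex_of_real (d i) else 0)"

lemma rdiag_carrier[simp]: "rdiag n d \<in> carrier_mat n n"
  by (simp add: rdiag_def)

lemma rdiag_dims[simp]: "dim_row (rdiag n d) = n" "dim_col (rdiag n d) = n"
  by (auto simp: rdiag_def)

lemma index_rdiag[simp]:
  "i < n \<Longrightarrow> j < n \<Longrightarrow> rdiag n d $$ (i,j) = (if i = j then complex_of_real (d i) else 0)"
  by (simp add: rdiag_def)

lemma adj_rdiag[simp]: "adj (rdiag n d) = rdiag n d"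
  by (rule eq_matI) auto

lemma index_rdiag_mult:
  "M \<in> carrier_mat n m \<Longrightarrow> i < n \<Longrightarrow> j < m \<Longrightarrow> (rdiag n d * M) $$ (i,j) = complex_of_real (d i) * M $$ (i,j)"
  by (simp add: index_mult_mat_sum[of _ n n _ m] if_distrib[of "\<lambda>z. z * _"] cong: if_cong)

lemma index_mult_rdiag:
  "M \<in> carrier_mat m n \<Longrightarrow> i < m \<Longrightarrow> j < n \<Longrightarrow> (M * rdiag n d) $$ (i,j) = M $$ (i,j) * complex_of_real (d j)"
  by (simp add: index_mult_mat_sum[of _ m n _ n] if_distrib[of "\<lambda>z. _ * z"] cong: if_cong)

lemma index_rdiag_mult_vec:
  "w \<in> carrier_vec n \<Longrightarrow> k < n \<Longrightarrow> (rdiag n d *\<^sub>v w) $ k = complex_of_real (d k) * w $ k"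
  by (simp add: index_mult_mat_vec_sum[of _ n n] if_distrib[of "\<lambda>z. z * _"] cong: if_cong)

lemma rdiag_mult_rdiag: "rdiag n d * rdiag n e = rdiag n (\<lambda>i. d i * e i)"
  by (rule eq_matI) (auto simp: index_rdiag_mult[of _ n n])

lemma rdiag_minus: "rdiag n d - rdiag n e = rdiag n (\<lambda>i. d i - e i)"
  by (rule eq_matI) auto

lemma mtrace_rdiag: "mtrace (rdiag n d) = (\<Sum>i<n. complex_of_real (d i))"
  by (simp add: mtrace_def)

definition unitary :: "nat \<Rightarrow> complex mat \<Rightarrow> bool" where
  "unitary n U \<longleftrightarrow> U \<in> carrier_mat n n \<and> adj U * U = 1\<^sub>m n \<and> U * adj U = 1\<^sub>m n"

lemma unitaryI: "U \<in> carrier_mat n n \<Longrightarrow> adj U * U = 1\<^sub>m n \<Longrightarrow> unitary n U"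
  using mat_mult_left_right_inverse[of "adj U" n U] unfolding unitary_def by auto

lemma unitary_carrier: "unitary n U \<Longrightarrow> U \<in> carrier_mat n n"
  by (simp add: unitary_def)

lemma unitary_cancel:
  assumes "unitary n U" "X \<in> carrier_mat n k"
  shows "adj U * (U * X) = X" "U * (adj U * X) = X"
proof -
  have U: "U \<in> carrier_mat n n" using assms unitary_def by auto
  have "adj U * (U * X) = (adj U * U) * X" using U assms by (simp add: assoc_mult_mat[of _ n n _ n _ k])
  thus "adj U * (U * X) = X" using assms unfolding unitary_def by auto
  have "U * (adj U * X) = (U * adj U) * X" using U assms by (simp add: assoc_mult_mat[of _ n n _ n _ k])
  thus "U * (adj U * X) = X" using assms unfolding unitary_def by auto
qed

lemma unitary_mult:
  assumes "unitary n U" "unitary n V"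
  shows "unitary n (U * V)"
proof (rule unitaryI)
  have U: "U \<in> carrier_mat n n" and V: "V \<in> carrier_mat n n" using assms unitary_carrier by auto
  then show "U * V \<in> carrier_mat n n" by simp
  have "adj (U * V) * (U * V) = adj V * (adj U * (U * V))"
    using U V by (simp add: adj_mult[OF U V] assoc_mult_mat[of _ n n _ n _ n])
  also have "\<dots> = 1\<^sub>m n" using assms by (simp add: unitary_cancel(1)[OF assms(1) V] unitary_def)
  finally show "adj (U * V) * (U * V) = 1\<^sub>m n" .
qed

lemma index_unitary_conj_rdiag:
  assumes "U \<in> carrier_mat n n" "i < n" "j < n"
  shows "(U * rdiag n d * adj U) $$ (i,j) = (\<Sum>k<n. U $$ (i,k) * complex_of_real (d k) * cnj (U $$ (j,k)))"
  using assms by (subst index_mult_mat_sum[of _ n n _ n]) (auto simp: index_mult_rdiag[of _ n n])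

lemma adj_unitary_conj_rdiag:
  "U \<in> carrier_mat n n \<Longrightarrow> adj (U * rdiag n d * adj U) = U * rdiag n d * adj U"
  using adj_mult_adj_conj[of "adj U" n "rdiag n d"] by simp

lemma unitary_conj_rdiag_square:
  assumes "unitary n V"
  shows "(V * rdiag n s * adj V) * (V * rdiag n s * adj V) = V * rdiag n (\<lambda>i. s i * s i) * adj V"
proof -
  have V: "V \<in> carrier_mat n n" using assms unitary_carrier by auto
  have "(V * rdiag n s * adj V) * (V * rdiag n s * adj V) = V * (rdiag n s * (adj V * (V * (rdiag n s * adj V))))"
    using V by (simp add: assoc_mult_mat[of _ n n _ n _ n])
  also have "adj V * (V * (rdiag n s * adj V)) = rdiag n s * adj V"
    using V by (intro unitary_cancel(1)[OF assms]) auto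
  finally show ?thesis
    using V by (simp add: assoc_mult_mat[of _ n n _ n _ n, symmetric] rdiag_mult_rdiag)
qed

lemma mtrace_unitary_conj:
  assumes "unitary n U" "D \<in> carrier_mat n n"
  shows "mtrace (U * D * adj U) = mtrace D" "mtrace (adj U * D * U) = mtrace D"
proof -
  have U: "U \<in> carrier_mat n n" using assms unitary_carrier by auto
  have "mtrace (U * D * adj U) = mtrace (adj U * (U * D))"
    using U assms by (intro mtrace_mult_comm[of _ n n]) auto
  then show "mtrace (U * D * adj U) = mtrace D" using assms by (simp add: unitary_cancel)
  have "mtrace (adj U * D * U) = mtrace (U * (adj U * D))"
    using U assms by (intro mtrace_mult_comm[of _ n n]) auto
  then show "mtrace (adj U * D * U) = mtrace D" using assms by (simp add: unitary_cancel)
qed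

section \<open>Spectral theorem for Hermitian matrices\<close>

lemma cnj_mult_self: "cnj z * z = complex_of_real ((cmod z)\<^sup>2)"
  by (metis complex_norm_square mult.commute)

lemma exists_unit_eigenvector:
  assumes A: "A \<in> carrier_mat n n" and n: "0 < n"
  shows "\<exists>e u. u \<in> carrier_vec n \<and> A *\<^sub>v u = e \<cdot>\<^sub>v u \<and> (\<Sum>i<n. (cmod (u $ i))\<^sup>2) = 1"
proof -
  from spectrum_non_empty[OF A n] obtain e where "eigenvalue A e" by (auto simp: spectrum_def)
  then obtain v where v: "v \<in> carrier_vec n" "v \<noteq> 0\<^sub>v n" "A *\<^sub>v v = e \<cdot>\<^sub>v v"
    using A by (auto simp: eigenvalue_def eigenvector_def)
  define s where "s = (\<Sum>i<n. (cmod (v $ i))\<^sup>2)"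
  obtain i where i: "i < n" "v $ i \<noteq> 0" using v by (metis carrier_vecD eq_vecI index_zero_vec(1,2))
  have "0 < (cmod (v $ i))\<^sup>2" using i by simp
  also have "\<dots> \<le> s" unfolding s_def using i by (intro member_le_sum) auto
  finally have s: "0 < s" .
  define u where "u = complex_of_real (1 / sqrt s) \<cdot>\<^sub>v v"
  have "A *\<^sub>v u = e \<cdot>\<^sub>v u" unfolding u_def using v A
    by (simp add: mult_mat_vec[OF A] smult_smult_assoc mult.commute)
  moreover have "(\<Sum>i<n. (cmod (u $ i))\<^sup>2) = (\<Sum>i<n. (cmod (v $ i))\<^sup>2 / s)"
    using v s by (intro sum.cong) (auto simp: u_def norm_divide power_divide real_sqrt_pow2)
  moreover have "\<dots> = 1" using s by (simp add: sum_divide_distrib[symmetric] s_def)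
  moreover have "u \<in> carrier_vec n" using v by (simp add: u_def)
  ultimately show ?thesis by auto
qed

lemma sum_householder_product:
  fixes w :: "nat \<Rightarrow> complex" and c :: complex
  assumes "i < n" "j < n"
  shows "(\<Sum>k<n. ((if k = i then 1 else 0) - c * cnj (w k) * w i) * ((if k = j then 1 else 0) - c * w k * cnj (w j)))
    = (if i = j then 1 else 0) + (c * c * (\<Sum>k<n. cnj (w k) * w k) - 2 * c) * w i * cnj (w j)"
proof -
  have e: "\<And>k. ((if k = i then 1 else 0) - c * cnj (w k) * w i) * ((if k = j then 1 else 0) - c * w k * cnj (w j))
     = (if k = i then (if k = j then 1 else 0) else 0) - (if k = i then c * w k * cnj (w j) else 0)
       - (if k = j then c * cnj (w k) * w i else 0) + c * c * (cnj (w k) * w k) * w i * cnj (w j)"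
    by (auto simp: algebra_simps)
  show ?thesis using assms
    by (simp only: e sum.distrib sum_subtractf sum.delta' finite_lessThan lessThan_iff sum_distrib_left[symmetric]
        sum_distrib_right[symmetric]) (auto simp: algebra_simps)
qed

definition householder :: "nat \<Rightarrow> (nat \<Rightarrow> complex) \<Rightarrow> complex mat" where
  "householder n w = mat n n (\<lambda>(i,j). (if i = j then 1 else 0)
      - complex_of_real (2 / (\<Sum>k<n. (cmod (w k))\<^sup>2)) * w i * cnj (w j))"

lemma unitary_householder:
  assumes s: "(\<Sum>k<n. (cmod (w k))\<^sup>2) \<noteq> 0"
  shows "unitary n (householder n w)"
proof (rule unitaryI)
  define s where "s = (\<Sum>k<n. (cmod (w k))\<^sup>2)"
  define c where "c = complex_of_real (2 / s)"
  let ?H = "householder n w"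
  show H: "?H \<in> carrier_mat n n" by (simp add: householder_def)
  show "adj ?H * ?H = 1\<^sub>m n"
  proof (rule eq_matI)
    fix i j assume "i < dim_row (1\<^sub>m n)" "j < dim_col (1\<^sub>m n)"
    hence ij: "i < n" "j < n" by auto
    have "(adj ?H * ?H) $$ (i,j) = (\<Sum>k<n. ((if k = i then 1 else 0) - c * cnj (w k) * w i) * ((if k = j then 1 else 0) - c * w k * cnj (w j)))"
      using ij H by (subst index_mult_mat_sum[of _ n n _ n]) (auto simp: householder_def c_def s_def intro!: sum.cong)
    also have "\<dots> = (if i = j then 1 else 0) + (c * c * complex_of_real s - 2 * c) * w i * cnj (w j)"
      unfolding sum_householder_product[OF ij] by (simp add: s_def cnj_mult_self)
    also have "c * c * complex_of_real s - 2 * c = 0" using s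
      by (simp add: c_def s_def field_simps power2_eq_square)
    finally show "(adj ?H * ?H) $$ (i,j) = 1\<^sub>m n $$ (i,j)" using ij by simp
  qed (use H in auto)
qed

text \<open>The reflection with \<open>w = u - \<alpha> e\<^sub>0\<close>, where \<open>\<alpha>\<close> is the phase of \<open>u\<^sub>0\<close>, maps \<open>e\<^sub>0\<close> to a
  unimodular multiple of \<open>u\<close>.\<close>

lemma unitary_with_first_column:
  assumes u: "u \<in> carrier_vec n" and n: "0 < n" and nu: "(\<Sum>i<n. (cmod (u $ i))\<^sup>2) = 1"
  shows "\<exists>U c. unitary n U \<and> (\<forall>k<n. U $$ (k,0) = c * u $ k)"
proof -
  define r where "r = cmod (u $ 0)"
  define \<alpha> where "\<alpha> = (if u $ 0 = 0 then 1 else u $ 0 / complex_of_real r)"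
  have a1: "cnj \<alpha> * \<alpha> = 1"
    by (auto simp: \<alpha>_def r_def cnj_mult_self norm_divide power_divide)
  have a2: "u $ 0 = \<alpha> * complex_of_real r"
    by (auto simp: \<alpha>_def r_def)
  define w where "w = (\<lambda>k. u $ k - (if k = 0 then \<alpha> else 0))"
  define s where "s = (\<Sum>k<n. (cmod (w k))\<^sup>2)"
  have w0: "w 0 = \<alpha> * complex_of_real (r - 1)" by (simp add: w_def a2 algebra_simps)
  have cma: "cmod \<alpha> = 1" by (auto simp: \<alpha>_def r_def norm_divide)
  have s_eq: "s = 2 - 2 * r"
  proof -
    have "s = (cmod (w 0))\<^sup>2 + (\<Sum>k\<in>{..<n} - {0}. (cmod (w k))\<^sup>2)"
      unfolding s_def using n by (subst sum.remove[of _ 0]) auto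
    also have "(\<Sum>k\<in>{..<n} - {0}. (cmod (w k))\<^sup>2) = (\<Sum>k\<in>{..<n} - {0}. (cmod (u $ k))\<^sup>2)"
      by (intro sum.cong) (auto simp: w_def)
    also have "\<dots> = 1 - r\<^sup>2" using nu n by (subst (asm) sum.remove[of _ 0]) (auto simp: r_def)
    also have "(cmod (w 0))\<^sup>2 = (r - 1)\<^sup>2"
      by (simp add: w0 norm_mult cma) (metis norm_of_real of_real_1 of_real_diff power2_abs)
    finally show ?thesis by (simp add: power2_eq_square algebra_simps)
  qed
  show ?thesis
  proof (cases "s = 0")
    case True
    have "\<And>k. k < n \<Longrightarrow> w k = 0" using True unfolding s_def
      by (subst (asm) sum_nonneg_eq_0_iff) auto
    hence uk: "\<And>k. k < n \<Longrightarrow> u $ k = (if k = 0 then \<alpha> else 0)" by (auto simp: w_def)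
    have "unitary n (1\<^sub>m n)" by (intro unitaryI) auto
    moreover have "\<forall>k<n. 1\<^sub>m n $$ (k,0) = cnj \<alpha> * u $ k" using n uk a1 by auto
    ultimately show ?thesis by blast
  next
    case False
    define c where "c = complex_of_real (2 / s)"
    define H where "H = householder n w"
    have "unitary n H" unfolding H_def using False by (intro unitary_householder) (simp add: s_def)
    moreover have "\<forall>k<n. H $$ (k,0) = cnj \<alpha> * u $ k"
    proof (intro allI impI)
      fix k assume k: "k < n"
      have "complex_of_real (s + r * 2) = 2" using s_eq by simp
      hence sc: "complex_of_real s + complex_of_real r * 2 = 2" by simp
      have "r \<noteq> 1" using False s_eq by auto
      hence hc: "c * cnj (w 0) = - cnj \<alpha>" using False s_eq
        by (simp add: c_def w0 field_simps) (simp add: distrib_left[symmetric] sc)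
      have "H $$ (k,0) = (if k = 0 then 1 else 0) - w k * (c * cnj (w 0))" using k n
        by (simp add: H_def householder_def c_def s_def algebra_simps)
      also have "\<dots> = (if k = 0 then 1 else 0) + cnj \<alpha> * w k" by (simp add: hc)
      also have "\<dots> = cnj \<alpha> * u $ k" using a1 by (auto simp: w_def algebra_simps)
      finally show "H $$ (k,0) = cnj \<alpha> * u $ k" .
    qed
    ultimately show ?thesis by blast
  qed
qed

lemma index_adj_conj_eigenvector_column:
  assumes A: "A \<in> carrier_mat n n" and Uu: "unitary n U" and u: "u \<in> carrier_vec n" "A *\<^sub>v u = e \<cdot>\<^sub>v u"
    and Uc: "\<forall>k<n. U $$ (k,0) = c * u $ k" and i: "i < n"
  shows "(adj U * A * U) $$ (i,0) = (if i = 0 then e else 0)"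
proof -
  have U: "U \<in> carrier_mat n n" using Uu unitary_carrier by auto
  have AU0: "(A * U) $$ (k,0) = e * U $$ (k,0)" if k: "k < n" for k
  proof -
    have "(A * U) $$ (k,0) = (\<Sum>l<n. A $$ (k,l) * (c * u $ l))"
      using A U k Uc i by (subst index_mult_mat_sum[of _ n n _ n]) auto
    also have "\<dots> = c * (A *\<^sub>v u) $ k" using A u(1) k
      by (subst index_mult_mat_vec_sum[of _ n n]) (auto simp: sum_distrib_left algebra_simps)
    finally show ?thesis using u k Uc by simp
  qed
  have "(adj U * A * U) $$ (i,0) = (\<Sum>k<n. adj U $$ (i,k) * (A * U) $$ (k,0))"
    using U A i by (subst assoc_mult_mat[of _ n n _ n _ n]) (auto simp: index_mult_mat_sum[of _ n n _ n])
  also have "\<dots> = e * (\<Sum>k<n. adj U $$ (i,k) * U $$ (k,0))"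
    by (simp add: AU0 sum_distrib_left algebra_simps)
  also have "(\<Sum>k<n. adj U $$ (i,k) * U $$ (k,0)) = (adj U * U) $$ (i,0)"
    using U i by (simp add: index_mult_mat_sum[of _ n n _ n])
  finally show ?thesis using Uu i unfolding unitary_def by auto
qed

lemma hermitian_deflation:
  assumes A: "A \<in> carrier_mat n n" and hA: "adj A = A" and n: "0 < n"
  shows "\<exists>U e. unitary n U \<and> (\<forall>i<n. (adj U * A * U) $$ (i,0) = (if i = 0 then complex_of_real e else 0)
                                   \<and> (adj U * A * U) $$ (0,i) = (if i = 0 then complex_of_real e else 0))"
proof -
  obtain e u where u: "u \<in> carrier_vec n" "A *\<^sub>v u = e \<cdot>\<^sub>v u" "(\<Sum>i<n. (cmod (u $ i))\<^sup>2) = 1"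
    using exists_unit_eigenvector[OF A n] by auto
  obtain U c where Uu: "unitary n U" and Uc: "\<forall>k<n. U $$ (k,0) = c * u $ k"
    using unitary_with_first_column[OF u(1) n u(3)] by auto
  have U: "U \<in> carrier_mat n n" using Uu unitary_carrier by auto
  define T where "T = adj U * A * U"
  have T: "T \<in> carrier_mat n n" using U A by (simp add: T_def)
  have T0: "T $$ (i,0) = (if i = 0 then e else 0)" if "i < n" for i
    unfolding T_def using index_adj_conj_eigenvector_column[OF A Uu u(1,2) Uc that] .
  have hT: "adj T = T" unfolding T_def by (rule adj_mult_adj_conj[OF U A hA])
  have Tsym: "T $$ (i,j) = cnj (T $$ (j,i))" if "i < n" "j < n" for i j
    using arg_cong[OF hT, of "\<lambda>M. M $$ (i,j)"] that T by auto
  have "cnj e = e" using Tsym[of 0 0] T0[of 0] n by simp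
  then have e_real: "e = complex_of_real (Re e)" by (metis Reals_cnj_iff of_real_Re)
  have T0': "T $$ (0,j) = (if j = 0 then e else 0)" if "j < n" for j
  proof -
    have "T $$ (0,j) = cnj (T $$ (j,0))" using Tsym[of 0 j] that n by simp
    also have "\<dots> = (if j = 0 then cnj e else 0)" using T0[OF that] by simp
    finally show ?thesis using \<open>cnj e = e\<close> by simp
  qed
  show ?thesis
    by (rule exI[of _ U], rule exI[of _ "Re e"]) (use Uu T0 T0' e_real in \<open>simp add: T_def\<close>)
qed

definition unitary_extend :: "nat \<Rightarrow> complex mat \<Rightarrow> complex mat" where
  "unitary_extend m U = mat (Suc m) (Suc m) (\<lambda>(i,j). if i = 0 \<or> j = 0 then (if i = j then 1 else 0) else U $$ (i-1, j-1))"

lemma unitary_unitary_extend: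
  assumes "unitary m U"
  shows "unitary (Suc m) (unitary_extend m U)"
proof (rule unitaryI)
  let ?V = "unitary_extend m U"
  have U: "U \<in> carrier_mat m m" using assms unitary_carrier by auto
  show V: "?V \<in> carrier_mat (Suc m) (Suc m)" by (simp add: unitary_extend_def)
  show "adj ?V * ?V = 1\<^sub>m (Suc m)"
  proof (rule eq_matI)
    fix i j assume "i < dim_row (1\<^sub>m (Suc m))" "j < dim_col (1\<^sub>m (Suc m))"
    hence ij: "i < Suc m" "j < Suc m" by auto
    have "(adj ?V * ?V) $$ (i,j) = (\<Sum>k<Suc m. cnj (?V $$ (k,i)) * ?V $$ (k,j))"
      using V ij by (simp add: index_mult_mat_sum[of _ "Suc m" "Suc m" _ "Suc m"])
    also have "\<dots> = cnj (?V $$ (0,i)) * ?V $$ (0,j) + (\<Sum>k<m. cnj (?V $$ (Suc k,i)) * ?V $$ (Suc k,j))"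
      by (rule sum.lessThan_Suc_shift)
    also have "\<dots> = 1\<^sub>m (Suc m) $$ (i,j)"
    proof (cases i; cases j)
      fix i' j' assume i': "i = Suc i'" and j': "j = Suc j'"
      have "(\<Sum>k<m. cnj (?V $$ (Suc k,i)) * ?V $$ (Suc k,j)) = (adj U * U) $$ (i',j')"
        using ij i' j' U by (auto simp: unitary_extend_def index_mult_mat_sum[of _ m m _ m] intro!: sum.cong)
      thus ?thesis using assms ij i' j' by (auto simp: unitary_extend_def unitary_def)
    qed (use ij in \<open>auto simp: unitary_extend_def\<close>)
    finally show "(adj ?V * ?V) $$ (i,j) = 1\<^sub>m (Suc m) $$ (i,j)" .
  qed (auto simp: unitary_extend_def)
qed

lemma unitary_extend_conj_rdiag:
  assumes U: "U \<in> carrier_mat m m" and T: "T \<in> carrier_mat (Suc m) (Suc m)"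
    and T0: "\<forall>i<Suc m. T $$ (i,0) = (if i = 0 then complex_of_real e else 0)
                      \<and> T $$ (0,i) = (if i = 0 then complex_of_real e else 0)"
    and block: "mat m m (\<lambda>(i,j). T $$ (Suc i, Suc j)) = U * rdiag m d * adj U"
  shows "T = unitary_extend m U * rdiag (Suc m) (\<lambda>i. if i = 0 then e else d (i - 1)) * adj (unitary_extend m U)"
    (is "T = ?V * rdiag (Suc m) ?d * adj ?V")
proof (rule eq_matI)
  have V: "?V \<in> carrier_mat (Suc m) (Suc m)" by (simp add: unitary_extend_def)
  fix i j assume "i < dim_row (?V * rdiag (Suc m) ?d * adj ?V)" "j < dim_col (?V * rdiag (Suc m) ?d * adj ?V)"
  hence ij: "i < Suc m" "j < Suc m" using V by auto
  have "(?V * rdiag (Suc m) ?d * adj ?V) $$ (i,j)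
      = (\<Sum>k<Suc m. ?V $$ (i,k) * complex_of_real (?d k) * cnj (?V $$ (j,k)))"
    by (rule index_unitary_conj_rdiag[OF V ij])
  also have "\<dots> = ?V $$ (i,0) * complex_of_real e * cnj (?V $$ (j,0))
        + (\<Sum>k<m. ?V $$ (i,Suc k) * complex_of_real (d k) * cnj (?V $$ (j,Suc k)))"
    by (subst sum.lessThan_Suc_shift) simp
  also have "\<dots> = T $$ (i,j)"
  proof (cases i; cases j)
    fix i' j' assume i': "i = Suc i'" and j': "j = Suc j'"
    have "(\<Sum>k<m. ?V $$ (i,Suc k) * complex_of_real (d k) * cnj (?V $$ (j,Suc k))) = (U * rdiag m d * adj U) $$ (i',j')"
      using ij i' j' U by (auto simp: unitary_extend_def index_unitary_conj_rdiag[OF U] intro!: sum.cong)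
    also have "\<dots> = T $$ (i,j)" using block[symmetric] ij i' j' by auto
    finally show ?thesis using ij i' j' by (auto simp: unitary_extend_def)
  qed (use ij T0 in \<open>auto simp: unitary_extend_def\<close>)
  finally show "T $$ (i,j) = (?V * rdiag (Suc m) ?d * adj ?V) $$ (i,j)" by simp
qed (use T in \<open>auto simp: unitary_extend_def\<close>)

theorem hermitian_spectral_decomp:
  "A \<in> carrier_mat n n \<Longrightarrow> adj A = A \<Longrightarrow> \<exists>U d. unitary n U \<and> A = U * rdiag n d * adj U"
proof (induction n arbitrary: A)
  case 0
  have "unitary 0 (1\<^sub>m 0)" by (intro unitaryI) auto
  moreover have "A = 1\<^sub>m 0 * rdiag 0 (\<lambda>_. 0) * adj (1\<^sub>m 0)" using 0 by (intro eq_matI) auto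
  ultimately show ?case by blast
next
  case (Suc m)
  obtain U e where Uu: "unitary (Suc m) U" and T0:
    "\<forall>i<Suc m. (adj U * A * U) $$ (i,0) = (if i = 0 then complex_of_real e else 0)
              \<and> (adj U * A * U) $$ (0,i) = (if i = 0 then complex_of_real e else 0)"
    using hermitian_deflation[OF Suc.prems] by blast
  have U: "U \<in> carrier_mat (Suc m) (Suc m)" using Uu unitary_carrier by blast
  define T where "T = adj U * A * U"
  have T: "T \<in> carrier_mat (Suc m) (Suc m)" using U Suc.prems by (simp add: T_def)
  have hT: "adj T = T" unfolding T_def using adj_mult_adj_conj[OF U Suc.prems] .
  define B where "B = mat m m (\<lambda>(i,j). T $$ (Suc i, Suc j))"
  have hB: "adj B = B"
  proof (rule eq_matI)
    fix i j assume "i < dim_row B" "j < dim_col B"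
    then show "adj B $$ (i,j) = B $$ (i,j)"
      using T arg_cong[OF hT, of "\<lambda>M. M $$ (Suc i, Suc j)"] by (simp add: B_def)
  qed (auto simp: B_def)
  obtain W d where Wu: "unitary m W" and Bd: "B = W * rdiag m d * adj W"
    using Suc.IH[of B] hB by (auto simp: B_def)
  let ?V = "unitary_extend m W" and ?d = "\<lambda>i. if i = 0 then e else d (i - 1)"
  have V: "?V \<in> carrier_mat (Suc m) (Suc m)" by (simp add: unitary_extend_def)
  have TV: "T = ?V * rdiag (Suc m) ?d * adj ?V"
    using unitary_extend_conj_rdiag[OF unitary_carrier[OF Wu] T] T0 Bd by (simp add: T_def B_def)
  have "A = U * T * adj U"
    unfolding T_def using U Suc.prems Uu
    by (simp add: assoc_mult_mat[of _ "Suc m" "Suc m" _ "Suc m" _ "Suc m"] unitary_cancel unitary_def)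
  also have "\<dots> = (U * ?V) * rdiag (Suc m) ?d * adj (U * ?V)"
    unfolding TV using U V by (simp add: assoc_mult_mat[of _ "Suc m" "Suc m" _ "Suc m" _ "Suc m"] adj_mult[of _ "Suc m" "Suc m" _ "Suc m"])
  finally show ?case using unitary_mult[OF Uu unitary_unitary_extend[OF Wu]] by blast
qed

section \<open>Positive semidefinite matrices and the trace norm\<close>

definition qform :: "nat \<Rightarrow> complex mat \<Rightarrow> complex vec \<Rightarrow> complex" where
  "qform n M v = (\<Sum>i<n. cnj (v $ i) * (M *\<^sub>v v) $ i)"

lemma psd_iff_qform: "psd n M \<longleftrightarrow> hermitian n M \<and> (\<forall>v. dim_vec v = n \<longrightarrow> 0 \<le> Re (qform n M v))"
  by (simp add: psd_def qform_def)

lemma psdD: "psd n M \<Longrightarrow> M \<in> carrier_mat n n \<and> adj M = M"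
  by (simp add: psd_def hermitian_def)

lemma sum_cnj_mult_adj_mult_vec:
  assumes V: "V \<in> carrier_mat n m" and v: "v \<in> carrier_vec m" and y: "y \<in> carrier_vec n"
  shows "(\<Sum>i<m. cnj (v $ i) * (adj V *\<^sub>v y) $ i) = (\<Sum>k<n. cnj ((V *\<^sub>v v) $ k) * y $ k)"
proof -
  have "(\<Sum>i<m. cnj (v $ i) * (adj V *\<^sub>v y) $ i) = (\<Sum>i<m. \<Sum>k<n. cnj (v $ i) * cnj (V $$ (k,i)) * y $ k)"
    using V y by (auto simp: index_mult_mat_vec_sum[of _ m n] sum_distrib_left algebra_simps intro!: sum.cong)
  also have "\<dots> = (\<Sum>k<n. \<Sum>i<m. cnj (v $ i) * cnj (V $$ (k,i)) * y $ k)" by (rule sum.swap)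
  also have "\<dots> = (\<Sum>k<n. cnj ((V *\<^sub>v v) $ k) * y $ k)"
    using V v by (auto simp: index_mult_mat_vec_sum[of _ n m] sum_distrib_right sum_distrib_left algebra_simps intro!: sum.cong)
  finally show ?thesis .
qed

lemma qform_adj_conj:
  assumes V: "V \<in> carrier_mat n n" and P: "P \<in> carrier_mat n n" and v: "v \<in> carrier_vec n"
  shows "qform n (adj V * P * V) v = qform n P (V *\<^sub>v v)"
proof -
  have "(adj V * P * V) *\<^sub>v v = adj V *\<^sub>v (P *\<^sub>v (V *\<^sub>v v))"
    using V P v by (simp add: assoc_mult_mat_vec[of _ n n _ n])
  thus ?thesis unfolding qform_def using sum_cnj_mult_adj_mult_vec[OF V v, of "P *\<^sub>v (V *\<^sub>v v)"] V P v by simp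
qed

lemma qform_unitary_conj_rdiag:
  assumes U: "U \<in> carrier_mat n n" and v: "v \<in> carrier_vec n"
  shows "qform n (U * rdiag n d * adj U) v = (\<Sum>k<n. complex_of_real (d k * (cmod ((adj U *\<^sub>v v) $ k))\<^sup>2))"
proof -
  define w where "w = adj U *\<^sub>v v"
  have w: "w \<in> carrier_vec n" using U v unfolding w_def by (metis adj_carrier mult_mat_vec_carrier)
  have dw: "rdiag n d *\<^sub>v w \<in> carrier_vec n" by (rule mult_mat_vec_carrier[OF rdiag_carrier w])
  have "(U * rdiag n d * adj U) *\<^sub>v v = adj (adj U) *\<^sub>v (rdiag n d *\<^sub>v w)"
    using U v w by (simp add: assoc_mult_mat_vec[of "U * rdiag n d" n n "adj U" n] assoc_mult_mat_vec[of U n n "rdiag n d" n] w_def)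
  hence "qform n (U * rdiag n d * adj U) v = (\<Sum>k<n. cnj (w $ k) * (rdiag n d *\<^sub>v w) $ k)"
    unfolding qform_def using sum_cnj_mult_adj_mult_vec[of "adj U" n n v "rdiag n d *\<^sub>v w"] U v w dw by (simp add: w_def)
  also have "\<dots> = (\<Sum>k<n. complex_of_real (d k) * (cnj (w $ k) * w $ k))"
    using w by (intro sum.cong) (auto simp: index_rdiag_mult_vec mult.left_commute)
  finally show ?thesis by (simp add: w_def cnj_mult_self)
qed

lemma psd_unitary_conj_rdiag:
  assumes U: "U \<in> carrier_mat n n" and d: "\<And>i. i < n \<Longrightarrow> 0 \<le> d i"
  shows "psd n (U * rdiag n d * adj U)"
  unfolding psd_iff_qform hermitian_def
proof (intro conjI allI impI)
  show "U * rdiag n d * adj U \<in> carrier_mat n n" using U by simp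
  show "adj (U * rdiag n d * adj U) = U * rdiag n d * adj U" using adj_unitary_conj_rdiag[OF U] .
  fix v :: "complex vec" assume "dim_vec v = n"
  hence v: "v \<in> carrier_vec n" by (intro carrier_vecI)
  have "Re (qform n (U * rdiag n d * adj U) v) = (\<Sum>k<n. d k * (cmod ((adj U *\<^sub>v v) $ k))\<^sup>2)"
    unfolding qform_unitary_conj_rdiag[OF U v] Re_sum by simp
  also have "\<dots> \<ge> 0" using d by (intro sum_nonneg mult_nonneg_nonneg) auto
  finally show "0 \<le> Re (qform n (U * rdiag n d * adj U) v)" .
qed

lemma psd_unitary_conj_rdiag_nonneg:
  assumes Uu: "unitary n U" and P: "psd n (U * rdiag n d * adj U)" and i: "i < n"
  shows "0 \<le> d i"
proof -
  have U: "U \<in> carrier_mat n n" using Uu unitary_carrier by auto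
  define v where "v = col U i"
  have v: "v \<in> carrier_vec n" using U unfolding v_def by (intro carrier_vecI) simp
  have av: "(adj U *\<^sub>v v) $ k = (if k = i then 1 else 0)" if k: "k < n" for k
  proof -
    have "(adj U *\<^sub>v v) $ k = (\<Sum>l<n. adj U $$ (k,l) * U $$ (l,i))"
      using U i k unfolding v_def by (subst index_mult_mat_vec_sum[of _ n n]) (auto intro!: carrier_vecI)
    also have "\<dots> = (adj U * U) $$ (k,i)"
      using U i k by (subst index_mult_mat_sum[of _ n n _ n]) auto
    finally show ?thesis using Uu i k unfolding unitary_def by simp
  qed
  have "Re (qform n (U * rdiag n d * adj U) v) = (\<Sum>k<n. d k * (cmod ((adj U *\<^sub>v v) $ k))\<^sup>2)"
    unfolding qform_unitary_conj_rdiag[OF U v] Re_sum by simp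
  also have "\<dots> = (\<Sum>k<n. if k = i then d i else 0)" by (rule sum.cong) (auto simp: av)
  also have "\<dots> = d i" using i by simp
  finally have "Re (qform n (U * rdiag n d * adj U) v) = d i" .
  moreover have "0 \<le> Re (qform n (U * rdiag n d * adj U) v)" using P v unfolding psd_iff_qform by auto
  ultimately show ?thesis by simp
qed

lemma rdiag_intertwine_sqrt:
  assumes C: "C \<in> carrier_mat n n"
    and s: "\<And>i. i < n \<Longrightarrow> 0 \<le> s i" and t: "\<And>i. i < n \<Longrightarrow> 0 \<le> t i"
    and sq: "rdiag n (\<lambda>i. t i * t i) * C = C * rdiag n (\<lambda>i. s i * s i)"
  shows "rdiag n t * C = C * rdiag n s"
proof (rule eq_matI)
  fix i j assume "i < dim_row (C * rdiag n s)" "j < dim_col (C * rdiag n s)"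
  hence ij: "i < n" "j < n" using C by auto
  have e: "complex_of_real (t i * t i) * C $$ (i,j) = C $$ (i,j) * complex_of_real (s j * s j)"
    using arg_cong[OF sq, of "\<lambda>M. M $$ (i,j)"] C ij by (simp add: index_rdiag_mult index_mult_rdiag)
  show "(rdiag n t * C) $$ (i,j) = (C * rdiag n s) $$ (i,j)"
  proof (cases "C $$ (i,j) = 0")
    case False
    then have "complex_of_real (t i * t i) = complex_of_real (s j * s j)"
      using e by (simp add: mult.commute)
    then have "t i * t i = s j * s j" by (simp only: of_real_eq_iff)
    then have "t i = s j" using s t ij by (metis abs_of_nonneg real_sqrt_abs2)
    then show ?thesis using C ij by (simp add: index_rdiag_mult index_mult_rdiag mult.commute)
  qed (use C ij in \<open>simp add: index_rdiag_mult index_mult_rdiag\<close>)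
qed (use C in auto)

lemma psd_square_inj:
  assumes S1: "psd n S1" and S2: "psd n S2" and eq: "S1 * S1 = S2 * S2"
  shows "S1 = S2"
proof -
  obtain V s where Vu: "unitary n V" and S1e: "S1 = V * rdiag n s * adj V"
    using hermitian_spectral_decomp psdD[OF S1] by blast
  obtain R t where Ru: "unitary n R" and S2e: "S2 = R * rdiag n t * adj R"
    using hermitian_spectral_decomp psdD[OF S2] by blast
  have V: "V \<in> carrier_mat n n" and R: "R \<in> carrier_mat n n" using Vu Ru unitary_carrier by auto
  have s: "\<And>i. i < n \<Longrightarrow> 0 \<le> s i" using psd_unitary_conj_rdiag_nonneg[OF Vu] S1 S1e by blast
  have t: "\<And>i. i < n \<Longrightarrow> 0 \<le> t i" using psd_unitary_conj_rdiag_nonneg[OF Ru] S2 S2e by blast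
  define C where "C = adj R * V"
  have C: "C \<in> carrier_mat n n" using R V by (simp add: C_def)
  have intertwine: "rdiag n u * C = adj R * (R * rdiag n u * adj R) * V"
    "C * rdiag n u = adj R * (V * rdiag n u * adj V) * V" for u
  proof -
    show "rdiag n u * C = adj R * (R * rdiag n u * adj R) * V"
      using R V unitary_cancel(1)[OF Ru, of "rdiag n u * C" n]
      by (simp add: C_def assoc_mult_mat[of _ n n _ n _ n])
    show "C * rdiag n u = adj R * (V * rdiag n u * adj V) * V"
      using R V Vu[unfolded unitary_def] by (simp add: C_def assoc_mult_mat[of _ n n _ n _ n])
  qed
  have sq: "rdiag n (\<lambda>i. t i * t i) * C = C * rdiag n (\<lambda>i. s i * s i)"
    using eq unfolding intertwine S1e S2e unitary_conj_rdiag_square[OF Vu] unitary_conj_rdiag_square[OF Ru] by simp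
  have key: "rdiag n t * C = C * rdiag n s" by (rule rdiag_intertwine_sqrt[OF C s t sq])
  have "C * adj V = adj R"
    unfolding C_def using R V Vu[unfolded unitary_def] by (simp add: assoc_mult_mat[of _ n n _ n _ n])
  then have "S2 = R * (rdiag n t * C) * adj V"
    unfolding S2e using R V C by (simp add: assoc_mult_mat[of _ n n _ n _ n])
  also have "\<dots> = R * (adj R * (V * rdiag n s)) * adj V"
    unfolding key unfolding C_def using R V by (simp add: assoc_mult_mat[of _ n n _ n _ n])
  also have "\<dots> = S1"
    unfolding S1e using V unitary_cancel(2)[OF Ru, of "V * rdiag n s" n] by simp
  finally show ?thesis by simp
qed

lemma psd_sqrt_eqI:
  assumes S: "psd n S" and M: "S * S = M"
  shows "psd_sqrt M = S"
proof -
  have "dim_row M = n" using M psdD[OF S] by auto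
  then show ?thesis unfolding psd_sqrt_def
  proof (intro the_equality)
    fix S' assume "psd (dim_row M) S' \<and> S' * S' = M"
    then show "S' = S" using psd_square_inj[of n S' S] S M \<open>dim_row M = n\<close> by simp
  qed (use S M in simp)
qed

lemma trace_norm_unitary_conj_rdiag:
  assumes Uu: "unitary n U" and X: "X = U * rdiag n d * adj U"
  shows "trace_norm X = (\<Sum>i<n. \<bar>d i\<bar>)"
proof -
  have U: "U \<in> carrier_mat n n" using Uu unitary_carrier by auto
  define S where "S = U * rdiag n (\<lambda>i. \<bar>d i\<bar>) * adj U"
  have S: "psd n S" unfolding S_def by (rule psd_unitary_conj_rdiag[OF U]) auto
  have "S * S = U * rdiag n (\<lambda>i. \<bar>d i\<bar> * \<bar>d i\<bar>) * adj U"
    unfolding S_def by (rule unitary_conj_rdiag_square[OF Uu])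
  also have "(\<lambda>i. \<bar>d i\<bar> * \<bar>d i\<bar>) = (\<lambda>i. d i * d i)" by (auto simp: abs_mult_self_eq)
  also have "U * rdiag n (\<lambda>i. d i * d i) * adj U = adj X * X"
    unfolding X adj_unitary_conj_rdiag[OF U] by (rule unitary_conj_rdiag_square[OF Uu, symmetric])
  finally have "psd_sqrt (adj X * X) = S" by (rule psd_sqrt_eqI[OF S])
  then have "trace_norm X = Re (mtrace (rdiag n (\<lambda>i. \<bar>d i\<bar>)))"
    by (simp add: trace_norm_def S_def mtrace_unitary_conj(1)[OF Uu])
  then show ?thesis by (simp add: mtrace_rdiag Re_sum)
qed

lemma psd_diag_nonneg:
  assumes P: "psd n P" and i: "i < n"
  shows "0 \<le> Re (P $$ (i,i))"
proof -
  have Pc: "P \<in> carrier_mat n n" using psdD[OF P] by auto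
  define v where "v = (unit_vec n i :: complex vec)"
  have v: "v \<in> carrier_vec n" by (simp add: v_def)
  have Pv: "(P *\<^sub>v v) $ k = P $$ (k,i)" if "k < n" for k
    using Pc i that by (simp add: v_def index_mult_mat_vec_sum[of _ n n] if_distrib[of "\<lambda>z. _ * z"] cong: if_cong)
  have "qform n P v = (\<Sum>k<n. (if k = i then P $$ (k,i) else 0))"
    unfolding qform_def using i by (intro sum.cong) (auto simp: Pv, auto simp: v_def)
  also have "\<dots> = P $$ (i,i)" using i by simp
  finally have "qform n P v = P $$ (i,i)" .
  moreover have "0 \<le> Re (qform n P v)" using P v unfolding psd_iff_qform by auto
  ultimately show ?thesis by simp
qed

lemma psd_trace_nonneg:
  assumes "psd n P"
  shows "0 \<le> Re (mtrace P)"
proof -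
  have "dim_row P = n" using psdD[OF assms] by auto
  then have "Re (mtrace P) = (\<Sum>i<n. Re (P $$ (i,i)))" by (simp add: mtrace_def Re_sum)
  also have "\<dots> \<ge> 0" using psd_diag_nonneg[OF assms] by (intro sum_nonneg) auto
  finally show ?thesis .
qed

lemma psd_adj_conj:
  assumes P: "psd n P" and V: "V \<in> carrier_mat n n"
  shows "psd n (adj V * P * V)"
  unfolding psd_iff_qform hermitian_def
proof (intro conjI allI impI)
  have Pc: "P \<in> carrier_mat n n" and hP: "adj P = P" using psdD[OF P] by auto
  show "adj V * P * V \<in> carrier_mat n n" using Pc V by simp
  show "adj (adj V * P * V) = adj V * P * V" by (rule adj_mult_adj_conj[OF V Pc hP])
  fix v :: "complex vec" assume "dim_vec v = n"
  hence v: "v \<in> carrier_vec n" by (intro carrier_vecI)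
  have "dim_vec (V *\<^sub>v v) = n" using V by simp
  hence "0 \<le> Re (qform n P (V *\<^sub>v v))" using P unfolding psd_iff_qform by blast
  thus "0 \<le> Re (qform n (adj V * P * V) v)" using qform_adj_conj[OF V Pc v] by simp
qed

lemma psd_add:
  assumes A: "psd n A" and B: "psd n B"
  shows "psd n (A + B)"
  unfolding psd_iff_qform hermitian_def
proof (intro conjI allI impI)
  have Ac: "A \<in> carrier_mat n n" and hA: "adj A = A" using psdD[OF A] by auto
  have Bc: "B \<in> carrier_mat n n" and hB: "adj B = B" using psdD[OF B] by auto
  show "A + B \<in> carrier_mat n n" using Bc by simp
  show "adj (A + B) = A + B" using Ac Bc hA hB by (simp add: adj_add)
  fix v :: "complex vec" assume dv: "dim_vec v = n"
  have "(A + B) *\<^sub>v v = A *\<^sub>v v + B *\<^sub>v v" using Ac Bc dv by (intro add_mult_distrib_mat_vec carrier_vecI)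
  then have "qform n (A + B) v = qform n A v + qform n B v"
    unfolding qform_def using Ac Bc by (simp add: distrib_left sum.distrib)
  moreover have "0 \<le> Re (qform n A v)" "0 \<le> Re (qform n B v)" using A B dv unfolding psd_iff_qform by auto
  ultimately show "0 \<le> Re (qform n (A + B) v)" by simp
qed

lemma psd_smult:
  assumes A: "psd n A" and c: "0 \<le> c"
  shows "psd n (complex_of_real c \<cdot>\<^sub>m A)"
  unfolding psd_iff_qform hermitian_def
proof (intro conjI allI impI)
  have Ac: "A \<in> carrier_mat n n" and hA: "adj A = A" using psdD[OF A] by auto
  show "complex_of_real c \<cdot>\<^sub>m A \<in> carrier_mat n n" using Ac by simp
  show "adj (complex_of_real c \<cdot>\<^sub>m A) = complex_of_real c \<cdot>\<^sub>m A" using hA by (simp add: adj_smult)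
  fix v :: "complex vec" assume dv: "dim_vec v = n"
  have v: "v \<in> carrier_vec n" using dv by (rule carrier_vecI)
  have "((complex_of_real c \<cdot>\<^sub>m A) *\<^sub>v v) $ i = complex_of_real c * (A *\<^sub>v v) $ i" if "i < n" for i
    using Ac v that by (simp add: index_mult_mat_vec_sum[of _ n n] sum_distrib_left mult.assoc)
  then have "qform n (complex_of_real c \<cdot>\<^sub>m A) v = complex_of_real c * qform n A v"
    unfolding qform_def by (simp add: sum_distrib_left mult.left_commute)
  moreover have "0 \<le> Re (qform n A v)" using A dv unfolding psd_iff_qform by auto
  ultimately show "0 \<le> Re (qform n (complex_of_real c \<cdot>\<^sub>m A) v)" using c by simp
qed

text \<open>\<open>\<langle>v, X\<^sup>T v\<rangle> = \<langle>v\<^sup>*, X v\<^sup>*\<rangle>\<close> for the entrywise conjugate \<open>v\<^sup>*\<close>.\<close>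

lemma psd_transpose:
  assumes P: "psd n X"
  shows "psd n (transpose_mat X)"
  unfolding psd_iff_qform hermitian_def
proof (intro conjI allI impI)
  have Xc: "X \<in> carrier_mat n n" and hX: "adj X = X" using psdD[OF P] by auto
  show "transpose_mat X \<in> carrier_mat n n" using Xc by simp
  show "adj (transpose_mat X) = transpose_mat X"
  proof (rule eq_matI)
    fix i j assume "i < dim_row (transpose_mat X)" "j < dim_col (transpose_mat X)"
    then show "adj (transpose_mat X) $$ (i,j) = transpose_mat X $$ (i,j)"
      using Xc arg_cong[OF hX, of "\<lambda>M. M $$ (j,i)"] by auto
  qed (use Xc in auto)
  fix v :: "complex vec" assume dv: "dim_vec v = n"
  define w where "w = vec n (\<lambda>i. cnj (v $ i))"
  have "qform n (transpose_mat X) v = (\<Sum>i<n. \<Sum>j<n. cnj (v $ i) * (X $$ (j,i) * v $ j))"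
    using Xc dv by (auto simp: qform_def index_mult_mat_vec_sum[of _ n n] sum_distrib_left intro!: sum.cong)
  also have "\<dots> = (\<Sum>j<n. \<Sum>i<n. v $ j * (X $$ (j,i) * cnj (v $ i)))"
    by (subst sum.swap) (simp only: ac_simps)
  also have "\<dots> = qform n X w"
    using Xc by (auto simp: qform_def w_def index_mult_mat_vec_sum[of _ n n] sum_distrib_left intro!: sum.cong)
  finally show "0 \<le> Re (qform n (transpose_mat X) v)" using P unfolding psd_iff_qform by (simp add: w_def)
qed

lemma trace_norm_psd_diff_le:
  assumes P: "psd n P" and N: "psd n N"
  shows "trace_norm (P - N) \<le> Re (mtrace P) + Re (mtrace N)"
proof -
  have Pc: "P \<in> carrier_mat n n" and hP: "adj P = P" using psdD[OF P] by auto
  have Nc: "N \<in> carrier_mat n n" and hN: "adj N = N" using psdD[OF N] by auto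
  have "P - N \<in> carrier_mat n n" "adj (P - N) = P - N" using Pc Nc hP hN by (auto simp: adj_minus)
  then obtain U d where Uu: "unitary n U" and Xe: "P - N = U * rdiag n d * adj U"
    using hermitian_spectral_decomp by blast
  have U: "U \<in> carrier_mat n n" using Uu unitary_carrier by auto
  define P' where "P' = adj U * P * U"
  define N' where "N' = adj U * N * U"
  have P': "psd n P'" unfolding P'_def by (rule psd_adj_conj[OF P U])
  have N': "psd n N'" unfolding N'_def by (rule psd_adj_conj[OF N U])
  have P'c: "P' \<in> carrier_mat n n" and N'c: "N' \<in> carrier_mat n n" using P' N' psdD by auto
  have "rdiag n d = adj U * (P - N) * U"
    unfolding Xe using U Uu[unfolded unitary_def] unitary_cancel(1)[OF Uu, of "rdiag n d" n]
    by (simp add: assoc_mult_mat[of _ n n _ n _ n])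
  also have "\<dots> = P' - N'"
    unfolding P'_def N'_def using U Pc Nc by (simp add: mult_minus_distrib_mat[of _ n n] minus_mult_distrib_mat[of _ n n])
  finally have D: "rdiag n d = P' - N'" .
  have "\<bar>d i\<bar> \<le> Re (P' $$ (i,i)) + Re (N' $$ (i,i))" if i: "i < n" for i
  proof -
    have "d i = Re (P' $$ (i,i)) - Re (N' $$ (i,i))"
      using arg_cong[OF D, of "\<lambda>M. Re (M $$ (i,i))"] i P'c N'c by simp
    thus ?thesis using psd_diag_nonneg[OF P' i] psd_diag_nonneg[OF N' i] by linarith
  qed
  then have "trace_norm (P - N) \<le> (\<Sum>i<n. Re (P' $$ (i,i)) + Re (N' $$ (i,i)))"
    unfolding trace_norm_unitary_conj_rdiag[OF Uu Xe] by (intro sum_mono) auto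
  also have "\<dots> = Re (mtrace P') + Re (mtrace N')" using P'c N'c by (simp add: mtrace_def sum.distrib Re_sum)
  finally show ?thesis unfolding P'_def N'_def mtrace_unitary_conj(2)[OF Uu Pc] mtrace_unitary_conj(2)[OF Uu Nc] .
qed

lemma hermitian_jordan_decomp:
  assumes Xc: "X \<in> carrier_mat n n" and hX: "adj X = X"
  obtains P N where "psd n P" "psd n N" "X = P - N" "trace_norm X = Re (mtrace P) + Re (mtrace N)"
proof -
  obtain U d where Uu: "unitary n U" and Xe: "X = U * rdiag n d * adj U"
    using hermitian_spectral_decomp[OF Xc hX] by blast
  have U: "U \<in> carrier_mat n n" using Uu unitary_carrier by auto
  define P where "P = U * rdiag n (\<lambda>i. max (d i) 0) * adj U"
  define N where "N = U * rdiag n (\<lambda>i. max (- d i) 0) * adj U"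
  have "P - N = (U * rdiag n (\<lambda>i. max (d i) 0) - U * rdiag n (\<lambda>i. max (- d i) 0)) * adj U"
    unfolding P_def N_def by (rule minus_mult_distrib_mat[of _ n n, symmetric]) (use U in auto)
  also have "\<dots> = U * (rdiag n (\<lambda>i. max (d i) 0) - rdiag n (\<lambda>i. max (- d i) 0)) * adj U"
    by (subst mult_minus_distrib_mat[of _ n n]) (use U in auto)
  also have "rdiag n (\<lambda>i. max (d i) 0) - rdiag n (\<lambda>i. max (- d i) 0) = rdiag n d"
    unfolding rdiag_minus by (rule arg_cong[of _ _ "rdiag n"]) auto
  finally have "X = P - N" using Xe by simp have "Re (mtrace P) = (\<Sum>i<n. max (d i) 0)" "Re (mtrace N) = (\<Sum>i<n. max (- d i) 0)"
    unfolding P_def N_def by (simp_all add: mtrace_unitary_conj(1)[OF Uu] mtrace_rdiag Re_sum)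
  moreover have "(\<Sum>i<n. \<bar>d i\<bar>) = (\<Sum>i<n. max (d i) 0) + (\<Sum>i<n. max (- d i) 0)"
    by (subst sum.distrib[symmetric]) (rule sum.cong; auto)
  ultimately have "trace_norm X = Re (mtrace P) + Re (mtrace N)"
    using trace_norm_unitary_conj_rdiag[OF Uu Xe] by simp
  moreover have "psd n P" "psd n N" unfolding P_def N_def by (auto intro: psd_unitary_conj_rdiag[OF U])
  ultimately show ?thesis using that \<open>X = P - N\<close> by blast
qed

section \<open>Partial transposes and channels acting on the first factor\<close>

lemma block_index_less:
  assumes "i < a" "k < (b::nat)"
  shows "i * b + k < a * b"
proof -
  have "i * b + k < Suc i * b" using assms by simp
  also have "\<dots> \<le> a * b" using assms by (intro mult_le_mono1) simp
  finally show ?thesis .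
qed

lemma mod_less_of_less_mult: "r < a * (b::nat) \<Longrightarrow> r mod b < b"
  by (metis mod_less_divisor mult_is_0 nat_neq_iff not_less_zero zero_less_iff_neq_zero)

lemma sum_lessThan_mult: "(\<Sum>r<a*b. g r) = (\<Sum>i<a. \<Sum>k<b. g (i*b + k :: nat))"
proof -
  have "(\<Sum>r<a*b. g r) = (\<Sum>m<a. sum g {m * b..<m * b + b})" by (rule sum.nat_group[symmetric])
  also have "\<dots> = (\<Sum>i<a. \<Sum>k<b. g (i*b + k))"
  proof (rule sum.cong[OF refl])
    fix m
    have "sum g {m * b..<m * b + b} = sum g {0 + m*b..<b + m*b}" by (simp add: add.commute)
    also have "\<dots> = (\<Sum>k<b. g (m*b + k))"
      by (subst sum.shift_bounds_nat_ivl) (simp add: atLeast0LessThan add.commute)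
    finally show "sum g {m * b..<m * b + b} = (\<Sum>k<b. g (m*b + k))" .
  qed
  finally show ?thesis .
qed

lemma ptrans_B_carrier[simp]: "ptrans_B dA dB X \<in> carrier_mat (dA*dB) (dA*dB)"
  by (simp add: ptrans_B_def)

lemma ptrans_A_carrier[simp]: "ptrans_A dA dB X \<in> carrier_mat (dA*dB) (dA*dB)"
  by (simp add: ptrans_A_def)

lemma tensor_id_carrier[simp]: "tensor_id dA dB E X \<in> carrier_mat (dA*dB) (dA*dB)"
  by (simp add: tensor_id_def)

lemma tensor_id_dims[simp]:
  "dim_row (tensor_id dA dB E X) = dA*dB" "dim_col (tensor_id dA dB E X) = dA*dB"
  by (simp_all add: tensor_id_def)

lemma adj_ptrans_B:
  assumes X: "X \<in> carrier_mat (dA*dB) (dA*dB)" and hX: "adj X = X"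
  shows "adj (ptrans_B dA dB X) = ptrans_B dA dB X"
proof (rule eq_matI)
  fix r c assume "r < dim_row (ptrans_B dA dB X)" "c < dim_col (ptrans_B dA dB X)"
  hence rc: "r < dA*dB" "c < dA*dB" by (auto simp: ptrans_B_def)
  let ?r = "(r div dB) * dB + c mod dB" and ?c = "(c div dB) * dB + r mod dB"
  have "?r < dA*dB" "?c < dA*dB"
    using rc by (auto intro!: block_index_less less_mult_imp_div_less mod_less_of_less_mult)
  then have "X $$ (?r, ?c) = cnj (X $$ (?c, ?r))"
    using arg_cong[OF hX, of "\<lambda>M. M $$ (?r, ?c)"] X by simp
  thus "adj (ptrans_B dA dB X) $$ (r,c) = ptrans_B dA dB X $$ (r,c)" using rc by (simp add: ptrans_B_def)
qed (auto simp: ptrans_B_def)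

lemma mtrace_ptrans_B: "X \<in> carrier_mat (dA*dB) (dA*dB) \<Longrightarrow> mtrace (ptrans_B dA dB X) = mtrace X"
  unfolding mtrace_def ptrans_B_def by (intro sum.cong) (auto simp: mult.commute)

lemma ptrans_B_ptrans_A:
  assumes X: "X \<in> carrier_mat (dA*dB) (dA*dB)"
  shows "ptrans_B dA dB (ptrans_A dA dB X) = transpose_mat X"
proof (rule eq_matI)
  fix r c assume "r < dim_row (transpose_mat X)" "c < dim_col (transpose_mat X)"
  hence rc: "r < dA*dB" "c < dA*dB" using X by auto
  have "(c div dB) * dB + r mod dB < dA*dB" "(r div dB) * dB + c mod dB < dA*dB"
    "r mod dB < dB" "c mod dB < dB"
    using rc by (auto intro!: block_index_less less_mult_imp_div_less mod_less_of_less_mult)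
  then show "ptrans_B dA dB (ptrans_A dA dB X) $$ (r,c) = transpose_mat X $$ (r,c)"
    using rc X by (simp add: ptrans_B_def ptrans_A_def mult.commute[of _ dB])
qed (use X in \<open>auto simp: ptrans_B_def\<close>)

lemma ptrans_B_tensor_id:
  assumes X: "X \<in> carrier_mat (dA*dB) (dA*dB)"
  shows "ptrans_B dA dB (tensor_id dA dB E X) = tensor_id dA dB E (ptrans_B dA dB X)"
proof (rule eq_matI)
  fix r c assume "r < dim_row (tensor_id dA dB E (ptrans_B dA dB X))" "c < dim_col (tensor_id dA dB E (ptrans_B dA dB X))"
  hence rc: "r < dA*dB" "c < dA*dB" by (auto simp: tensor_id_def)
  have b: "r mod dB < dB" "c mod dB < dB" using rc by (auto intro!: mod_less_of_less_mult)
  have blocks: "mat dA dA (\<lambda>(i,j). ptrans_B dA dB X $$ (i * dB + r mod dB, j * dB + c mod dB))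
     = mat dA dA (\<lambda>(i,j). X $$ (i * dB + c mod dB, j * dB + r mod dB))"
  proof (rule eq_matI)
    fix i j assume "i < dim_row (mat dA dA (\<lambda>(i,j). X $$ (i * dB + c mod dB, j * dB + r mod dB)))"
      "j < dim_col (mat dA dA (\<lambda>(i,j). X $$ (i * dB + c mod dB, j * dB + r mod dB)))"
    hence ij: "i < dA" "j < dA" by auto
    have "i * dB + r mod dB < dA * dB" "j * dB + c mod dB < dA * dB" using ij b by (auto intro!: block_index_less)
    thus "mat dA dA (\<lambda>(i,j). ptrans_B dA dB X $$ (i * dB + r mod dB, j * dB + c mod dB)) $$ (i,j)
        = mat dA dA (\<lambda>(i,j). X $$ (i * dB + c mod dB, j * dB + r mod dB)) $$ (i,j)"
      using ij b by (simp add: ptrans_B_def)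
  qed auto
  have "(c div dB) * dB + r mod dB < dA*dB" "(r div dB) * dB + c mod dB < dA*dB"
    using rc by (auto intro!: block_index_less less_mult_imp_div_less mod_less_of_less_mult)
  then have "ptrans_B dA dB (tensor_id dA dB E X) $$ (r,c)
      = E (mat dA dA (\<lambda>(i,j). X $$ (i * dB + c mod dB, j * dB + r mod dB))) $$ (r div dB, c div dB)"
    using rc b by (simp add: ptrans_B_def tensor_id_def)
  also have "\<dots> = tensor_id dA dB E (ptrans_B dA dB X) $$ (r,c)"
    using rc by (simp only: blocks[symmetric]) (simp add: tensor_id_def)
  finally show "ptrans_B dA dB (tensor_id dA dB E X) $$ (r,c) = tensor_id dA dB E (ptrans_B dA dB X) $$ (r,c)" .
qed (auto simp: ptrans_B_def tensor_id_def)

lemma ptrans_B_lincomb: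
  assumes "A \<in> carrier_mat (dA*dB) (dA*dB)" "B \<in> carrier_mat (dA*dB) (dA*dB)"
  shows "ptrans_B dA dB (a \<cdot>\<^sub>m A + b \<cdot>\<^sub>m B) = a \<cdot>\<^sub>m ptrans_B dA dB A + b \<cdot>\<^sub>m ptrans_B dA dB B"
proof (rule eq_matI)
  fix r c assume "r < dim_row (a \<cdot>\<^sub>m ptrans_B dA dB A + b \<cdot>\<^sub>m ptrans_B dA dB B)"
    "c < dim_col (a \<cdot>\<^sub>m ptrans_B dA dB A + b \<cdot>\<^sub>m ptrans_B dA dB B)"
  hence rc: "r < dA*dB" "c < dA*dB" by (auto simp: ptrans_B_def)
  have "(c div dB) * dB + r mod dB < dA*dB" "(r div dB) * dB + c mod dB < dA*dB"
    using rc by (auto intro!: block_index_less less_mult_imp_div_less mod_less_of_less_mult)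
  then show "ptrans_B dA dB (a \<cdot>\<^sub>m A + b \<cdot>\<^sub>m B) $$ (r,c) = (a \<cdot>\<^sub>m ptrans_B dA dB A + b \<cdot>\<^sub>m ptrans_B dA dB B) $$ (r,c)"
    using rc assms by (simp add: ptrans_B_def)
qed (auto simp: ptrans_B_def)

lemma tensor_id_lincomb:
  assumes E: "linear_map_on dA E"
    and X: "X \<in> carrier_mat (dA*dB) (dA*dB)" and Y: "Y \<in> carrier_mat (dA*dB) (dA*dB)"
  shows "tensor_id dA dB E (a \<cdot>\<^sub>m X + b \<cdot>\<^sub>m Y) = a \<cdot>\<^sub>m tensor_id dA dB E X + b \<cdot>\<^sub>m tensor_id dA dB E Y"
proof (rule eq_matI)
  fix r c assume "r < dim_row (a \<cdot>\<^sub>m tensor_id dA dB E X + b \<cdot>\<^sub>m tensor_id dA dB E Y)"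
    "c < dim_col (a \<cdot>\<^sub>m tensor_id dA dB E X + b \<cdot>\<^sub>m tensor_id dA dB E Y)"
  hence rc: "r < dA*dB" "c < dA*dB" by (auto simp: tensor_id_def)
  have b: "r mod dB < dB" "c mod dB < dB" using rc by (auto intro!: mod_less_of_less_mult)
  have dl: "r div dB < dA" "c div dB < dA" using rc by (auto intro!: less_mult_imp_div_less)
  define block :: "complex mat \<Rightarrow> complex mat"
    where "block M = mat dA dA (\<lambda>(i,j). M $$ (i * dB + r mod dB, j * dB + c mod dB))" for M
  have block_carrier: "block M \<in> carrier_mat dA dA" for M by (simp add: block_def)
  have "block (a \<cdot>\<^sub>m X + b \<cdot>\<^sub>m Y) = a \<cdot>\<^sub>m block X + b \<cdot>\<^sub>m block Y"
  proof (rule eq_matI)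
    fix i j assume "i < dim_row (a \<cdot>\<^sub>m block X + b \<cdot>\<^sub>m block Y)" "j < dim_col (a \<cdot>\<^sub>m block X + b \<cdot>\<^sub>m block Y)"
    hence ij: "i < dA" "j < dA" by (auto simp: block_def)
    have "i * dB + r mod dB < dA * dB" "j * dB + c mod dB < dA * dB" using ij b by (auto intro!: block_index_less)
    thus "block (a \<cdot>\<^sub>m X + b \<cdot>\<^sub>m Y) $$ (i,j) = (a \<cdot>\<^sub>m block X + b \<cdot>\<^sub>m block Y) $$ (i,j)"
      using ij X Y by (simp add: block_def)
  qed (auto simp: block_def)
  then have "E (block (a \<cdot>\<^sub>m X + b \<cdot>\<^sub>m Y)) = a \<cdot>\<^sub>m E (block X) + b \<cdot>\<^sub>m E (block Y)"
    using E block_carrier unfolding linear_map_on_def by simp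
  moreover have "E (block X) \<in> carrier_mat dA dA" "E (block Y) \<in> carrier_mat dA dA"
    using E block_carrier unfolding linear_map_on_def by auto
  ultimately show "tensor_id dA dB E (a \<cdot>\<^sub>m X + b \<cdot>\<^sub>m Y) $$ (r,c)
      = (a \<cdot>\<^sub>m tensor_id dA dB E X + b \<cdot>\<^sub>m tensor_id dA dB E Y) $$ (r,c)"
    using rc dl by (simp add: tensor_id_def block_def)
qed (auto simp: tensor_id_def)

lemma tensor_id_minus:
  assumes E: "linear_map_on dA E"
    and X: "X \<in> carrier_mat (dA*dB) (dA*dB)" and Y: "Y \<in> carrier_mat (dA*dB) (dA*dB)"
  shows "tensor_id dA dB E (X - Y) = tensor_id dA dB E X - tensor_id dA dB E Y"
proof -
  have "X - Y = 1 \<cdot>\<^sub>m X + (-1) \<cdot>\<^sub>m Y" using X Y by (intro eq_matI) auto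
  then have "tensor_id dA dB E (X - Y) = 1 \<cdot>\<^sub>m tensor_id dA dB E X + (-1) \<cdot>\<^sub>m tensor_id dA dB E Y"
    using tensor_id_lincomb[OF E X Y] by simp
  also have "\<dots> = tensor_id dA dB E X - tensor_id dA dB E Y" by (intro eq_matI) auto
  finally show ?thesis .
qed

lemma mtrace_tensor_id:
  assumes E: "cptp dA E" and X: "X \<in> carrier_mat (dA*dB) (dA*dB)"
  shows "mtrace (tensor_id dA dB E X) = mtrace X"
proof -
  define block where "block k = mat dA dA (\<lambda>(i,j). X $$ (i * dB + k, j * dB + k))" for k
  have block_carrier: "block k \<in> carrier_mat dA dA" for k by (simp add: block_def)
  have "dim_row (E (block k)) = dA" "mtrace (E (block k)) = mtrace (block k)" for k
    using E block_carrier unfolding cptp_def linear_map_on_def by auto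
  then have E_diag: "(\<Sum>i<dA. E (block k) $$ (i, i)) = (\<Sum>i<dA. X $$ (i * dB + k, i * dB + k))" for k
    by (simp add: mtrace_def block_def)
  have "mtrace (tensor_id dA dB E X) = (\<Sum>r<dA*dB. E (block (r mod dB)) $$ (r div dB, r div dB))"
    by (simp add: mtrace_def tensor_id_def block_def)
  also have "\<dots> = (\<Sum>k<dB. \<Sum>i<dA. E (block k) $$ (i, i))"
    by (subst sum_lessThan_mult, subst sum.swap) (auto intro!: sum.cong)
  also have "\<dots> = (\<Sum>i<dA. \<Sum>k<dB. X $$ (i * dB + k, i * dB + k))"
    by (simp add: E_diag sum.swap[of _ "{..<dB}"])
  also have "\<dots> = mtrace X" using X by (simp add: mtrace_def sum_lessThan_mult)
  finally show ?thesis .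
qed

lemma psd_tensor_id: "cptp dA E \<Longrightarrow> psd (dA*dB) X \<Longrightarrow> psd (dA*dB) (tensor_id dA dB E X)"
  by (simp add: cptp_def)

lemma trace_norm_channel_mixture_le:
  assumes E1: "cptp dA E1" and E2: "cptp dA E2" and p: "0 \<le> p" "p \<le> 1"
    and X: "X \<in> carrier_mat (dA*dB) (dA*dB)" "adj X = X" "mtrace X = 1"
    and Z: "psd (dA*dB) Z" "mtrace Z = 1"
  shows "trace_norm (complex_of_real p \<cdot>\<^sub>m tensor_id dA dB E1 X
                     + complex_of_real (1 - p) \<cdot>\<^sub>m tensor_id dA dB E2 Z) \<le> trace_norm X"
proof -
  let ?n = "dA * dB" and ?T1 = "tensor_id dA dB E1" and ?T2 = "tensor_id dA dB E2"
  obtain P N where P: "psd ?n P" and N: "psd ?n N" and XPN: "X = P - N"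
    and tnX: "trace_norm X = Re (mtrace P) + Re (mtrace N)"
    using hermitian_jordan_decomp[OF X(1,2)] by blast
  have Pc: "P \<in> carrier_mat ?n ?n" and Nc: "N \<in> carrier_mat ?n ?n" using P N psdD by auto
  have Zc: "Z \<in> carrier_mat ?n ?n" using Z psdD by auto
  have "?T1 X = ?T1 P - ?T1 N"
    unfolding XPN using E1 Pc Nc by (intro tensor_id_minus) (auto simp: cptp_def)
  then have out: "complex_of_real p \<cdot>\<^sub>m ?T1 X + complex_of_real (1 - p) \<cdot>\<^sub>m ?T2 Z
      = (complex_of_real p \<cdot>\<^sub>m ?T1 P + complex_of_real (1 - p) \<cdot>\<^sub>m ?T2 Z) - complex_of_real p \<cdot>\<^sub>m ?T1 N"
    by (intro eq_matI) (simp_all add: algebra_simps)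
  have P': "psd ?n (complex_of_real p \<cdot>\<^sub>m ?T1 P + complex_of_real (1 - p) \<cdot>\<^sub>m ?T2 Z)"
    using p by (intro psd_add psd_smult psd_tensor_id[OF E1 P] psd_tensor_id[OF E2 Z(1)]) auto
  have N': "psd ?n (complex_of_real p \<cdot>\<^sub>m ?T1 N)"
    using p by (intro psd_smult psd_tensor_id[OF E1 N])
  have "trace_norm (complex_of_real p \<cdot>\<^sub>m ?T1 X + complex_of_real (1 - p) \<cdot>\<^sub>m ?T2 Z)
      \<le> Re (mtrace (complex_of_real p \<cdot>\<^sub>m ?T1 P + complex_of_real (1 - p) \<cdot>\<^sub>m ?T2 Z))
        + Re (mtrace (complex_of_real p \<cdot>\<^sub>m ?T1 N))"
    unfolding out by (rule trace_norm_psd_diff_le[OF P' N'])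
  also have "\<dots> = p * (Re (mtrace P) + Re (mtrace N)) + (1 - p)"
    using Pc Nc Zc Z(2)
    by (simp add: mtrace_add[of _ ?n] mtrace_smult[of _ ?n] mtrace_tensor_id[OF E1] mtrace_tensor_id[OF E2]
        algebra_simps)
  also have "\<dots> \<le> Re (mtrace P) + Re (mtrace N)"
  proof -
    have "Re (mtrace P) - Re (mtrace N) = 1"
      using X(3) Pc Nc by (simp add: XPN mtrace_minus flip: minus_complex.sel(1))
    then have "1 \<le> Re (mtrace P) + Re (mtrace N)" using psd_trace_nonneg[OF N] by linarith
    then have "0 \<le> (1 - p) * (Re (mtrace P) + Re (mtrace N) - 1)" using p by simp
    then show ?thesis by (simp add: algebra_simps)
  qed
  finally show ?thesis using tnX by simp
qed

theorem mainTheorem6: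
  fixes dA dB :: nat and E1 E2 :: "complex mat \<Rightarrow> complex mat" and p :: real
    and \<rho> :: "complex mat"
  assumes "cptp dA E1" and "cptp dA E2"
    and "0 \<le> p" and "p \<le> 1"
    and "density_op (dA * dB) \<rho>"
  shows "negativity dA dB
           (complex_of_real p \<cdot>\<^sub>m tensor_id dA dB E1 \<rho>
            + complex_of_real (1 - p) \<cdot>\<^sub>m tensor_id dA dB E2 (ptrans_A dA dB \<rho>))
         \<le> negativity dA dB \<rho>"
proof -
  have \<rho>: "psd (dA * dB) \<rho>" "mtrace \<rho> = 1" using assms(5) by (auto simp: density_op_def)
  have \<rho>c: "\<rho> \<in> carrier_mat (dA * dB) (dA * dB)" "adj \<rho> = \<rho>" using psdD[OF \<rho>(1)] by auto
  have "ptrans_B dA dB (complex_of_real p \<cdot>\<^sub>m tensor_id dA dB E1 \<rho>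
                        + complex_of_real (1 - p) \<cdot>\<^sub>m tensor_id dA dB E2 (ptrans_A dA dB \<rho>))
      = complex_of_real p \<cdot>\<^sub>m tensor_id dA dB E1 (ptrans_B dA dB \<rho>)
        + complex_of_real (1 - p) \<cdot>\<^sub>m tensor_id dA dB E2 (transpose_mat \<rho>)"
    using \<rho>c by (simp add: ptrans_B_lincomb ptrans_B_tensor_id ptrans_B_ptrans_A)
  also have "trace_norm \<dots> \<le> trace_norm (ptrans_B dA dB \<rho>)"
    using \<rho> \<rho>c by (intro trace_norm_channel_mixture_le assms(1-4) adj_ptrans_B psd_transpose)
      (auto simp: mtrace_ptrans_B mtrace_transpose)
  finally show ?thesis unfolding negativity_def by simp
qed

end
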